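(* In the situation of Lemma 2 (frontier ${}^ts\,y x^h y\,s$, points $I$, $J=I+(0,-1)$, rays $i_n=t(I+n(1,0))$, $j_n=t(J+n(1,-1))$), let $k'_n=t(J+n(1,-1)+(1,0))$ be the value immediately to the right of $j_n$. Then $k'_n-1=(h+1)\,i_n\,i_{n+1}$ for all $n\in\mathbf N$. Consequently, with $k_n=t(J+n(1,-1)+(0,-1))$, the triple $(j_{n+1}+j_n,\;j_{n+1}-j_n,\;k_n+k'_n)$ is a Pythagorean triple: $(j_{n+1}-j_n)^2+(k_n+k'_n)^2=(j_{n+1}+j_n)^2$.
   Context: Cartesian coordinates on $\mathbf Z^2$. The transpose ${}^tw$ of a word reverses it and exchanges $x$ and $y$. Setting: $h\in\mathbf N$, $s$ a right-infinite word over $\{x,y\}$ with the frontier ${}^ts\,yx^hy\,s$ admissible (neither half ultimately constant), embedded as lattice points $P_i$ with $P_i-P_{i-1}=(1,0)$ for a letter $x$ and $(0,1)$ for a letter $y$; $t:\mathbf Z^2\to\mathbf N$ is the unique tiling with $t(a,b+1)t(a+1,b)-t(a,b)t(a+1,b+1)=1$ for all $(a,b)$ and $t(P_i)=1$; $I$ is the path point between $x^h$ and the following $y$ of the middle factor $yx^hy$. *)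

theory Defs
  imports Main
begin

datatype letter = X | Y

text \<open>Exchange of x and y (letterwise part of the transpose).\<close>
fun swap_letter :: "letter \<Rightarrow> letter" where
  "swap_letter X = Y"
| "swap_letter Y = X"

definition ult_const :: "(nat \<Rightarrow> letter) \<Rightarrow> bool" where
  "ult_const s \<longleftrightarrow> (\<exists>N c. \<forall>k\<ge>N. s k = c)"

text \<open>The bi-infinite frontier  (transpose s) y x^h y s, indexed by the integers:
  position 0 is the first y of the middle factor, positions 1..h are the x's,
  position h+1 is the second y; positions > h+1 carry s, positions < 0 carry
  the transpose of s (position -1-k carries the swap of s k).\<close>
definition frontier :: "nat \<Rightarrow> (nat \<Rightarrow> letter) \<Rightarrow> int \<Rightarrow> letter" where
  "frontier h s i =
     (if i < 0 then swap_letter (s (nat (- i - 1)))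
      else if i = 0 \<or> i = int h + 1 then Y
      else if i \<le> int h then X
      else s (nat (i - int h - 2)))"

fun step :: "letter \<Rightarrow> int \<times> int" where
  "step X = (1, 0)"
| "step Y = (0, 1)"

definition is_path :: "(int \<Rightarrow> letter) \<Rightarrow> (int \<Rightarrow> int \<times> int) \<Rightarrow> bool" where
  "is_path w P \<longleftrightarrow> (\<forall>i. P i = (fst (P (i - 1)) + fst (step (w i)),
                                   snd (P (i - 1)) + snd (step (w i))))"

definition sl2_tiling :: "(int \<times> int \<Rightarrow> int) \<Rightarrow> bool" where
  "sl2_tiling t \<longleftrightarrow>
     (\<forall>a b. t (a, b + 1) * t (a + 1, b) - t (a, b) * t (a + 1, b + 1) = 1)"

end

theory Submission
  imports Defs Complex_Main "HOL-Library.Product_Plus"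
begin

(* A positive SL2-tiling t is of Pluecker type: there are vector sequences u
   (indexed by columns) and v (indexed by rows) in R^2 with t(a,b) = det(u a, v b) and det(u a, u (a+1)) = 1
   = det(v (b+1), v b).  Along a path of ones the vectors evolve additively: an x-step from
   column a to a+1 on row b gives u (a+1) = u a + v b, a y-step gives v (b+1) = u a + v b.
   The frontier  ^t s y x^h y s  is symmetric under transposition about the middle factor,
   so walking simultaneously forward along s and backward along ^t s, the two walks stay mirror
   images, and their vectors are related by a fixed linear map L (a negated shear in the basis
   u x0, v y0, where I = (x0, y0)).  Since s contains infinitely many x's, the forward walk meets
   every column x0 + n, so v (y0 - 1 - n) = L (u (x0 + n)) on the whole antidiagonal below I.
   Expanding t = det(u, L u) then expresses j_n, k_n and k'_n through i_n = t(x0 + n, y0), and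
   the Pythagorean identity is a polynomial identity in i_n, i_(n+1). *)

definition det2 :: "real \<times> real \<Rightarrow> real \<times> real \<Rightarrow> real" where
  "det2 p q = fst p * snd q - snd p * fst q"

lemma det2_swap: "det2 q p = - det2 p q"
  by (simp add: det2_def)

lemma det2_self: "det2 p p = 0"
  by (simp add: det2_def)

lemma det2_plucker: "det2 p q' * det2 p' q - det2 p q * det2 p' q' = det2 p p' * det2 q' q"
  by (simp add: det2_def algebra_simps)

lemma det2_expand:
  assumes "det2 p q = 1"
  shows "w = (det2 w q * fst p + det2 p w * fst q, det2 w q * snd p + det2 p w * snd q)"
proof -
  have "fst w = fst w * det2 p q" "snd w = snd w * det2 p q" using assms by simp_all
  then show ?thesis by (simp add: det2_def prod_eq_iff algebra_simps)
qed

(* The vector w with det(p,w) = det(w,q) = 1 = det(p,q) is p + q; this is how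
   vectors are updated along a path of ones. *)
lemma det2_unimodular_sum:
  assumes "det2 p q = 1" "det2 p w = 1" "det2 w q = 1"
  shows "w = p + q"
  using det2_expand[OF assms(1), of w] assms(2,3) by (simp add: prod_eq_iff)

lemma sl2_tilingD: "sl2_tiling t \<Longrightarrow> t (a, b + 1) * t (a + 1, b) - t (a, b) * t (a + 1, b + 1) = 1"
  by (simp add: sl2_tiling_def)

lemma sl2_tiling_pos:
  assumes "sl2_tiling t" "\<forall>p. 0 \<le> t p"
  shows "0 < t p"
proof -
  obtain a b where p: "p = (a, b)" by (cases p)
  have "t (a, b) * t (a + 1, b - 1) - t (a, b - 1) * t (a + 1, b) = 1"
    using sl2_tilingD[OF assms(1), of a "b - 1"] by simp
  moreover have "0 \<le> t (a, b - 1) * t (a + 1, b)" using assms(2) by simp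
  ultimately have "t (a, b) \<noteq> 0" by auto
  with assms(2) p show ?thesis by (metis order_le_less)
qed

(* From the two unimodular squares sharing column a: the ratio
   (t(a-1,b) + t(a+1,b)) / t(a,b) does not change from row b to row b+1. *)
lemma sl2_tiling_neighbour_sums:
  assumes "sl2_tiling t"
  shows "(t (a - 1, b) + t (a + 1, b)) * t (a, b + 1) = (t (a - 1, b + 1) + t (a + 1, b + 1)) * t (a, b)"
  using sl2_tilingD[OF assms, of "a - 1" b] sl2_tilingD[OF assms, of a b]
  by (simp add: algebra_simps)

lemma int_shift_invariant_const:
  fixes f :: "int \<Rightarrow> 'a"
  assumes "\<And>i. f (i + 1) = f i"
  shows "f i = f j"
proof (induction i rule: int_induct[where k = j])
  case (step2 i)
  then show ?case using assms[of "i - 1"] by simp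
qed (use assms in simp_all)

definition row_ratio :: "(int \<times> int \<Rightarrow> int) \<Rightarrow> int \<Rightarrow> real" where
  "row_ratio t a = real_of_int (t (a - 1, 0) + t (a + 1, 0)) / real_of_int (t (a, 0))"

lemma sl2_tiling_row_ratio:
  assumes "sl2_tiling t" "\<forall>p. 0 \<le> t p"
  shows "real_of_int (t (a - 1, b)) + real_of_int (t (a + 1, b)) = row_ratio t a * real_of_int (t (a, b))"
proof -
  define r where "r b = real_of_int (t (a - 1, b) + t (a + 1, b)) / real_of_int (t (a, b))" for b
  have pos: "real_of_int (t (a, b)) > 0" for b using sl2_tiling_pos[OF assms] by simp
  have "r (b + 1) = r b" for b
  proof -
    have "real_of_int ((t (a - 1, b) + t (a + 1, b)) * t (a, b + 1))
        = real_of_int ((t (a - 1, b + 1) + t (a + 1, b + 1)) * t (a, b))"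
      using sl2_tiling_neighbour_sums[OF assms(1)] by presburger
    then show ?thesis unfolding r_def using pos[of b] pos[of "b + 1"] by (simp add: field_simps)
  qed
  then have "r b = r 0" by (rule int_shift_invariant_const)
  then show ?thesis unfolding r_def row_ratio_def using pos[of b] pos[of 0] by (simp add: field_simps)
qed

lemma three_term_recurrence_unique:
  fixes f g :: "int \<Rightarrow> real"
  assumes f_rec: "\<And>i. f (i - 1) + f (i + 1) = c i * f i"
    and g_rec: "\<And>i. g (i - 1) + g (i + 1) = c i * g i"
    and "f a = g a" "f (a + 1) = g (a + 1)"
  shows "f i = g i"
proof -
  have "f i = g i \<and> f (i + 1) = g (i + 1)"
  proof (induction i rule: int_induct[where k = a])
    case base
    then show ?case using assms(3,4) by simp
  next
    case (step1 i)
    then have "f (i + 2) = g (i + 2)"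
      using f_rec[of "i + 1"] g_rec[of "i + 1"] by (simp add: add.assoc)
    with step1 show ?case by (simp add: add.assoc)
  next
    case (step2 i)
    then have "f (i - 1) = g (i - 1)" using f_rec[of i] g_rec[of i] by simp
    with step2 show ?case by simp
  qed
  then show ?thesis by blast
qed

definition col_vec :: "(int \<times> int \<Rightarrow> int) \<Rightarrow> int \<Rightarrow> int \<Rightarrow> real \<times> real" where
  "col_vec t y0 a = (real_of_int (t (a, y0)), real_of_int (t (a, y0 - 1)))"

(* Row vector of row b: the unique vector with det(col_vec a, row_vec b) = t(a,b),
   written through its determinants against the column vectors of x0 and x0+1. *)
definition row_vec :: "(int \<times> int \<Rightarrow> int) \<Rightarrow> int \<Rightarrow> int \<Rightarrow> int \<Rightarrow> real \<times> real" where
  "row_vec t x0 y0 b =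
     (real_of_int (t (x0, b)) * fst (col_vec t y0 (x0 + 1)) - real_of_int (t (x0 + 1, b)) * fst (col_vec t y0 x0),
      real_of_int (t (x0, b)) * snd (col_vec t y0 (x0 + 1)) - real_of_int (t (x0 + 1, b)) * snd (col_vec t y0 x0))"

lemma col_vec_det:
  assumes "sl2_tiling t"
  shows "det2 (col_vec t y0 a) (col_vec t y0 (a + 1)) = 1"
proof -
  have "t (a, y0) * t (a + 1, y0 - 1) - t (a, y0 - 1) * t (a + 1, y0) = 1"
    using sl2_tilingD[OF assms, of a "y0 - 1"] by simp
  then have "real_of_int (t (a, y0) * t (a + 1, y0 - 1) - t (a, y0 - 1) * t (a + 1, y0)) = 1"
    by simp
  then show ?thesis unfolding det2_def col_vec_def by simp
qed

(* Representation theorem: t(a,b) = det(col_vec a, row_vec b).  Both sides solve the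
   row recurrence in a and agree at columns x0 and x0+1. *)
lemma sl2_tiling_representation:
  assumes "sl2_tiling t" "\<forall>p. 0 \<le> t p"
  shows "real_of_int (t (a, b)) = det2 (col_vec t y0 a) (row_vec t x0 y0 b)"
proof (rule three_term_recurrence_unique[where c = "row_ratio t" and a = x0
    and f = "\<lambda>i. real_of_int (t (i, b))" and g = "\<lambda>i. det2 (col_vec t y0 i) (row_vec t x0 y0 b)"])
  show "real_of_int (t (i - 1, b)) + real_of_int (t (i + 1, b)) = row_ratio t i * real_of_int (t (i, b))" for i
    using sl2_tiling_row_ratio[OF assms] .
  show "det2 (col_vec t y0 (i - 1)) (row_vec t x0 y0 b) + det2 (col_vec t y0 (i + 1)) (row_vec t x0 y0 b)
      = row_ratio t i * det2 (col_vec t y0 i) (row_vec t x0 y0 b)" for i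
  proof -
    define q where "q = row_vec t x0 y0 b"
    have "det2 (col_vec t y0 (i - 1)) q + det2 (col_vec t y0 (i + 1)) q
        = (real_of_int (t (i - 1, y0)) + real_of_int (t (i + 1, y0))) * snd q
          - (real_of_int (t (i - 1, y0 - 1)) + real_of_int (t (i + 1, y0 - 1))) * fst q"
      by (simp add: det2_def col_vec_def algebra_simps)
    also have "\<dots> = row_ratio t i * det2 (col_vec t y0 i) q"
      unfolding sl2_tiling_row_ratio[OF assms] by (simp add: det2_def col_vec_def algebra_simps)
    finally show ?thesis unfolding q_def .
  qed
  have d: "det2 (col_vec t y0 x0) (col_vec t y0 (x0 + 1)) = 1"
    using col_vec_det[OF assms(1)] .
  have "det2 (col_vec t y0 x0) (row_vec t x0 y0 b)
      = real_of_int (t (x0, b)) * det2 (col_vec t y0 x0) (col_vec t y0 (x0 + 1))"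
    "det2 (col_vec t y0 (x0 + 1)) (row_vec t x0 y0 b)
      = real_of_int (t (x0 + 1, b)) * det2 (col_vec t y0 x0) (col_vec t y0 (x0 + 1))"
    unfolding det2_def row_vec_def by (simp_all add: algebra_simps)
  then show "real_of_int (t (x0, b)) = det2 (col_vec t y0 x0) (row_vec t x0 y0 b)"
    "real_of_int (t (x0 + 1, b)) = det2 (col_vec t y0 (x0 + 1)) (row_vec t x0 y0 b)"
    using d by simp_all
qed

(* Consecutive row vectors are unimodular too (by the Pluecker relation). *)
lemma row_vec_det:
  assumes "sl2_tiling t" "\<forall>p. 0 \<le> t p"
  shows "det2 (row_vec t x0 y0 (b + 1)) (row_vec t x0 y0 b) = 1"
proof -
  let ?p = "col_vec t y0 x0" and ?p' = "col_vec t y0 (x0 + 1)"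
  have "real_of_int (t (x0, b + 1) * t (x0 + 1, b) - t (x0, b) * t (x0 + 1, b + 1)) = 1"
    using sl2_tilingD[OF assms(1)] by simp
  then have "det2 ?p (row_vec t x0 y0 (b + 1)) * det2 ?p' (row_vec t x0 y0 b)
      - det2 ?p (row_vec t x0 y0 b) * det2 ?p' (row_vec t x0 y0 (b + 1)) = 1"
    using sl2_tiling_representation[OF assms] by simp
  then show ?thesis using det2_plucker col_vec_det[OF assms(1), of y0 x0] by simp
qed

lemma col_vec_step:
  assumes "sl2_tiling t" "\<forall>p. 0 \<le> t p" "t (a, b) = 1" "t (a + 1, b) = 1"
  shows "col_vec t y0 (a + 1) = col_vec t y0 a + row_vec t x0 y0 b"
proof (rule det2_unimodular_sum)
  show "det2 (col_vec t y0 a) (col_vec t y0 (a + 1)) = 1" using col_vec_det[OF assms(1)] .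
  show "det2 (col_vec t y0 a) (row_vec t x0 y0 b) = 1" "det2 (col_vec t y0 (a + 1)) (row_vec t x0 y0 b) = 1"
    using assms(3,4) sl2_tiling_representation[OF assms(1,2)] by (metis of_int_1)+
qed

lemma row_vec_step:
  assumes "sl2_tiling t" "\<forall>p. 0 \<le> t p" "t (a, b) = 1" "t (a, b + 1) = 1"
  shows "row_vec t x0 y0 (b + 1) = col_vec t y0 a + row_vec t x0 y0 b"
proof (rule det2_unimodular_sum)
  show "det2 (row_vec t x0 y0 (b + 1)) (row_vec t x0 y0 b) = 1" using row_vec_det[OF assms(1,2)] .
  show "det2 (col_vec t y0 a) (row_vec t x0 y0 b) = 1" "det2 (col_vec t y0 a) (row_vec t x0 y0 (b + 1)) = 1"
    using assms(3,4) sl2_tiling_representation[OF assms(1,2)] by (metis of_int_1)+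
qed

(* For a unimodular basis (p,q): the linear map sending  alpha p + beta q  to
   -alpha p + (c alpha - beta) q, where alpha = det(w,q) and beta = det(p,w).
   With c = h+1 it relates the two halves of the frontier. *)
definition neg_shear :: "real \<Rightarrow> real \<times> real \<Rightarrow> real \<times> real \<Rightarrow> real \<times> real \<Rightarrow> real \<times> real" where
  "neg_shear c p q w =
     (- det2 w q * fst p + (c * det2 w q - det2 p w) * fst q,
      - det2 w q * snd p + (c * det2 w q - det2 p w) * snd q)"

lemma neg_shear_add: "neg_shear c p q (w + w') = neg_shear c p q w + neg_shear c p q w'"
  by (simp add: neg_shear_def det2_def algebra_simps)

lemma neg_shear_first:
  "det2 p q = 1 \<Longrightarrow> neg_shear c p q p = (c * fst q - fst p, c * snd q - snd p)"
  by (simp add: neg_shear_def det2_def algebra_simps)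

lemma neg_shear_second: "det2 p q = 1 \<Longrightarrow> neg_shear c p q q = - q"
  by (simp add: neg_shear_def det2_def algebra_simps prod_eq_iff)

(* Determinants against an image of neg_shear; this turns entries on the antidiagonal
   into products of entries on row y0. *)
lemma det2_neg_shear:
  assumes "det2 p q = 1"
  shows "det2 w (neg_shear c p q w') = c * det2 w q * det2 w' q - det2 w w'"
proof -
  have "det2 w w' * det2 p q = det2 w q * det2 p w' - det2 p w * det2 w' q"
    by (simp add: det2_def algebra_simps)
  then have "det2 w w' = det2 w q * det2 p w' - det2 p w * det2 w' q"
    using assms by simp
  then show ?thesis by (simp add: neg_shear_def det2_def algebra_simps)
qed

(* A lattice path P embedding the frontier  ^t s y x^h y s.  I = P h = (x0, y0) is the point
   between x^h and the following y. *)
locale frontier_path =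
  fixes h :: nat and s :: "nat \<Rightarrow> letter" and P :: "int \<Rightarrow> int \<times> int"
  assumes path: "is_path (frontier h s) P"
begin

definition x0 :: int where "x0 = fst (P (int h))"
definition y0 :: int where "y0 = snd (P (int h))"

lemma P_I: "P (int h) = (x0, y0)"
  by (simp add: x0_def y0_def)

lemma path_step:
  "P (i + 1) = (fst (P i) + fst (step (frontier h s (i + 1))), snd (P i) + snd (step (frontier h s (i + 1))))"
  using path unfolding is_path_def by (metis add_diff_cancel_right')

lemma P_middle: "m \<le> h \<Longrightarrow> P (int h - int m) = (x0 - int m, y0)"
proof (induction m)
  case 0
  then show ?case using P_I by simp
next
  case (Suc m)
  have "frontier h s (int h - int (Suc m) + 1) = X"
    using Suc.prems unfolding frontier_def by auto
  then have "P (int h - int m) = (fst (P (int h - int (Suc m))) + 1, snd (P (int h - int (Suc m))))"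
    using path_step[of "int h - int (Suc m)"] by simp
  moreover have "P (int h - int m) = (x0 - int m, y0)" using Suc by simp
  ultimately show ?case by (simp add: prod_eq_iff)
qed

lemma P_before_middle: "P (-1) = (x0 - int h, y0 - 1)"
proof -
  have "frontier h s (-1 + 1) = Y" unfolding frontier_def by simp
  then have "P 0 = (fst (P (-1)), snd (P (-1)) + 1)" using path_step[of "-1"] by simp
  then show ?thesis using P_middle[of h] by (simp add: prod_eq_iff)
qed

lemma P_after_middle: "P (int h + 1) = (x0, y0 + 1)"
proof -
  have "frontier h s (int h + 1) = Y" unfolding frontier_def by simp
  then show ?thesis using path_step[of "int h"] P_I by simp
qed

definition fwd :: "nat \<Rightarrow> int \<times> int" where "fwd k = P (int h + 1 + int k)"
definition bwd :: "nat \<Rightarrow> int \<times> int" where "bwd k = P (-1 - int k)"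

lemma fwd_step: "fwd (Suc k) = (fst (fwd k) + fst (step (s k)), snd (fwd k) + snd (step (s k)))"
proof -
  have letter: "frontier h s (int h + 1 + int k + 1) = s k" unfolding frontier_def by simp
  have "P (int h + 1 + int (Suc k)) = P (int h + 1 + int k + 1)" by simp
  also have "\<dots> = (fst (P (int h + 1 + int k)) + fst (step (s k)), snd (P (int h + 1 + int k)) + snd (step (s k)))"
    using path_step[of "int h + 1 + int k"] unfolding letter .
  finally show ?thesis unfolding fwd_def .
qed

lemma bwd_step:
  "bwd k = (fst (bwd (Suc k)) + fst (step (swap_letter (s k))), snd (bwd (Suc k)) + snd (step (swap_letter (s k))))"
proof -
  have letter: "frontier h s (-1 - int (Suc k) + 1) = swap_letter (s k)" unfolding frontier_def by simp
  have "P (-1 - int k) = P (-1 - int (Suc k) + 1)" by simp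
  also have "\<dots> = (fst (P (-1 - int (Suc k))) + fst (step (swap_letter (s k))),
                    snd (P (-1 - int (Suc k))) + snd (step (swap_letter (s k))))"
    using path_step[of "-1 - int (Suc k)"] unfolding letter .
  finally show ?thesis unfolding bwd_def .
qed

(* The backward walk is the reflection of the forward walk: the transposition symmetry
   of the frontier, in coordinates. *)
lemma bwd_mirror: "bwd k = (x0 + 1 - int h - (snd (fwd k) - y0), y0 - 1 - (fst (fwd k) - x0))"
proof (induction k)
  case 0
  then show ?case using P_before_middle P_after_middle by (simp add: fwd_def bwd_def)
next
  case (Suc k)
  then show ?case using fwd_step[of k] bwd_step[of k] by (cases "s k") (auto simp: prod_eq_iff)
qed

(* Since s has infinitely many x's, the forward walk passes through every column right of I
   (discrete intermediate value theorem). *)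
lemma fwd_reaches_column:
  assumes "\<not> ult_const s"
  shows "\<exists>k. fst (fwd k) = x0 + int n"
proof -
  have col_step: "fst (fwd (Suc k)) = fst (fwd k) + (if s k = X then 1 else 0)" for k
    using fwd_step[of k] by (cases "s k") auto
  have mono: "fst (fwd k) \<le> fst (fwd k')" if "k \<le> k'" for k k'
    using lift_Suc_mono_le[of "\<lambda>k. fst (fwd k)", OF _ that] col_step by simp
  have unbounded: "\<exists>k. x0 + int n \<le> fst (fwd k)" for n
  proof (induction n)
    case 0
    show ?case using P_after_middle by (intro exI[of _ 0]) (simp add: fwd_def)
  next
    case (Suc n)
    then obtain k where k: "x0 + int n \<le> fst (fwd k)" by blast
    obtain m where m: "k \<le> m" "s m \<noteq> Y"
      using assms unfolding ult_const_def by blast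
    then have "s m = X" by (cases "s m") auto
    have "x0 + int (Suc n) \<le> fst (fwd (Suc m))" using k mono[OF m(1)] col_step[of m] \<open>s m = X\<close> by simp
    then show ?case by blast
  qed
  obtain k where "x0 + int n \<le> fst (fwd k)" using unbounded by blast
  moreover have "fst (fwd 0) = x0" using P_after_middle by (simp add: fwd_def)
  moreover have "\<bar>fst (fwd (Suc i)) - fst (fwd i)\<bar> \<le> 1" for i using col_step[of i] by simp
  ultimately show ?thesis
    using nat_intermed_int_val[of 0 k "\<lambda>k. fst (fwd k)" "x0 + int n"] by auto
qed

end

locale frontier_tiling = frontier_path +
  fixes t :: "int \<times> int \<Rightarrow> int"
  assumes admissible: "\<not> ult_const s"
    and nonneg: "\<forall>p. 0 \<le> t p"
    and tiling: "sl2_tiling t"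
    and ones: "\<forall>i. t (P i) = 1"
begin

definition u :: "int \<Rightarrow> real \<times> real" where "u = col_vec t y0"
definition v :: "int \<Rightarrow> real \<times> real" where "v = row_vec t x0 y0"
definition L :: "real \<times> real \<Rightarrow> real \<times> real" where "L = neg_shear (real h + 1) (u x0) (v y0)"

lemma t_as_det: "real_of_int (t (a, b)) = det2 (u a) (v b)"
  unfolding u_def v_def using sl2_tiling_representation[OF tiling nonneg] .

lemma one_on_path: "P i = p \<Longrightarrow> t p = 1"
  using ones by blast

lemma det_u_v_I: "det2 (u x0) (v y0) = 1"
  using t_as_det[of x0 y0] one_on_path[OF P_I] by simp

lemma u_step: "t (a, b) = 1 \<Longrightarrow> t (a + 1, b) = 1 \<Longrightarrow> u (a + 1) = u a + v b"
  unfolding u_def v_def using col_vec_step[OF tiling nonneg] .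

lemma v_step: "t (a, b) = 1 \<Longrightarrow> t (a, b + 1) = 1 \<Longrightarrow> v (b + 1) = u a + v b"
  unfolding u_def v_def using row_vec_step[OF tiling nonneg] .

lemma u_middle:
  "m \<le> h \<Longrightarrow> u (x0 - int m) = (fst (u x0) - real m * fst (v y0), snd (u x0) - real m * snd (v y0))"
proof (induction m)
  case 0
  then show ?case by simp
next
  case (Suc m)
  have "t (x0 - int (Suc m), y0) = 1"
    using one_on_path[OF P_middle[OF Suc.prems]] .
  moreover have "t (x0 - int (Suc m) + 1, y0) = 1"
    using one_on_path[OF P_middle[of m]] Suc.prems by simp
  ultimately have "u (x0 - int (Suc m) + 1) = u (x0 - int (Suc m)) + v y0"
    by (rule u_step)
  then have "u (x0 - int m) = u (x0 - int (Suc m)) + v y0"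
    by simp
  with Suc show ?case by (auto simp: prod_eq_iff algebra_simps)
qed

lemma mirror_start: "v (y0 - 1) = L (u x0)" "u (x0 - int h) = - L (v (y0 + 1))"
proof -
  have v_up: "v (y0 + 1) = u x0 + v y0"
  proof (rule v_step)
    show "t (x0, y0) = 1" "t (x0, y0 + 1) = 1"
      using one_on_path[OF P_I] one_on_path[OF P_after_middle] .
  qed
  have v_down: "v (y0 - 1 + 1) = u (x0 - int h) + v (y0 - 1)"
  proof (rule v_step)
    show "t (x0 - int h, y0 - 1) = 1" using one_on_path[OF P_before_middle] .
    show "t (x0 - int h, y0 - 1 + 1) = 1" using one_on_path[OF P_middle[of h]] by simp
  qed
  have u_h: "u (x0 - int h) = (fst (u x0) - real h * fst (v y0), snd (u x0) - real h * snd (v y0))"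
    using u_middle[of h] by simp
  show "v (y0 - 1) = L (u x0)"
    unfolding L_def neg_shear_first[OF det_u_v_I] using v_down u_h by (simp add: prod_eq_iff algebra_simps)
  show "u (x0 - int h) = - L (v (y0 + 1))"
    unfolding v_up L_def neg_shear_add neg_shear_first[OF det_u_v_I] neg_shear_second[OF det_u_v_I] u_h
    by (simp add: prod_eq_iff algebra_simps)
qed

(* The mirror relation propagates along both walks: an x-step forward is a y-step
   backward and vice versa, and L is linear. *)
lemma mirror_vectors:
  "v (snd (bwd k)) = L (u (fst (fwd k))) \<and> u (fst (bwd k)) = - L (v (snd (fwd k)))"
proof (induction k)
  case 0
  have "fwd 0 = (x0, y0 + 1)" "bwd 0 = (x0 - int h, y0 - 1)"
    using P_after_middle P_before_middle by (simp_all add: fwd_def bwd_def)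
  then show ?case using mirror_start by simp
next
  case (Suc k)
  obtain a b where F: "fwd k = (a, b)" by (cases "fwd k")
  obtain a' b' where B: "bwd (Suc k) = (a', b')" by (cases "bwd (Suc k)")
  have ones_F: "t (fwd k) = 1" "t (fwd (Suc k)) = 1" and ones_B: "t (bwd k) = 1" "t (bwd (Suc k)) = 1"
    unfolding fwd_def bwd_def using one_on_path by blast+
  show ?case
  proof (cases "s k")
    case X
    then have F': "fwd (Suc k) = (a + 1, b)" and B': "bwd k = (a', b' + 1)"
      using fwd_step[of k] bwd_step[of k] F B by simp_all
    have u_next: "u (a + 1) = u a + v b" using u_step[of a b] ones_F F F' by simp
    have v_next: "v (b' + 1) = u a' + v b'" using v_step[of a' b'] ones_B B B' by simp
    have IH: "v (b' + 1) = L (u a)" "u a' = - L (v b)" using Suc.IH F B' by simp_all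
    have "v b' = L (u a) + L (v b)" using v_next IH by (simp add: algebra_simps)
    also have "\<dots> = L (u (a + 1))" unfolding u_next L_def neg_shear_add ..
    finally show ?thesis using IH F' B by simp
  next
    case Y
    then have F': "fwd (Suc k) = (a, b + 1)" and B': "bwd k = (a' + 1, b')"
      using fwd_step[of k] bwd_step[of k] F B by simp_all
    have v_next: "v (b + 1) = u a + v b" using v_step[of a b] ones_F F F' by simp
    have u_next: "u (a' + 1) = u a' + v b'" using u_step[of a' b'] ones_B B B' by simp
    have IH: "v b' = L (u a)" "u (a' + 1) = - L (v b)" using Suc.IH F B' by simp_all
    have "u a' = - L (v b) - L (u a)" using u_next IH by (simp add: algebra_simps)
    also have "\<dots> = - L (v (b + 1))" unfolding v_next L_def neg_shear_add by (simp add: algebra_simps)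
    finally show ?thesis using IH F' B by simp
  qed
qed

lemma antidiagonal: "v (y0 - 1 - int n) = L (u (x0 + int n))"
proof -
  obtain k where k: "fst (fwd k) = x0 + int n" using fwd_reaches_column[OF admissible] by blast
  then have "snd (bwd k) = y0 - 1 - int n" using bwd_mirror[of k] by simp
  with k show ?thesis using mirror_vectors[of k] by simp
qed

lemma antidiagonal_value:
  "real_of_int (t (x0 + int m, y0 - 1 - int n))
     = (real h + 1) * real_of_int (t (x0 + int m, y0)) * real_of_int (t (x0 + int n, y0))
       - det2 (u (x0 + int m)) (u (x0 + int n))"
  unfolding t_as_det antidiagonal L_def det2_neg_shear[OF det_u_v_I] ..

lemma u_det: "det2 (u a) (u (a + 1)) = 1"
  unfolding u_def using col_vec_det[OF tiling] .

lemma antidiagonal_square: "t (x0 + int n, y0 - 1 - int n) = (int h + 1) * t (x0 + int n, y0) ^ 2"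
proof -
  have "real_of_int (t (x0 + int n, y0 - 1 - int n)) = real_of_int ((int h + 1) * t (x0 + int n, y0) ^ 2)"
    using antidiagonal_value[of n n] by (simp add: det2_self power2_eq_square)
  then show ?thesis by (simp only: of_int_eq_iff)
qed

lemma right_neighbour_value:
  "t (x0 + int n + 1, y0 - 1 - int n) = (int h + 1) * t (x0 + int n, y0) * t (x0 + int (n + 1), y0) + 1"
proof -
  have "x0 + int (n + 1) = x0 + int n + 1" by simp
  then have "det2 (u (x0 + int (n + 1))) (u (x0 + int n)) = - 1"
    using det2_swap u_det by metis
  then have "real_of_int (t (x0 + int (n + 1), y0 - 1 - int n))
      = real_of_int ((int h + 1) * t (x0 + int n, y0) * t (x0 + int (n + 1), y0) + 1)"
    using antidiagonal_value[of "n + 1" n] by simp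
  then show ?thesis by (simp only: of_int_eq_iff add.assoc of_nat_add of_nat_1)
qed

lemma lower_neighbour_value:
  "t (x0 + int n, y0 - 2 - int n) = (int h + 1) * t (x0 + int n, y0) * t (x0 + int (n + 1), y0) - 1"
proof -
  have "x0 + int (n + 1) = x0 + int n + 1" by simp
  then have "det2 (u (x0 + int n)) (u (x0 + int (n + 1))) = 1"
    using u_det by metis
  then have "real_of_int (t (x0 + int n, y0 - 1 - int (n + 1)))
      = real_of_int ((int h + 1) * t (x0 + int n, y0) * t (x0 + int (n + 1), y0) - 1)"
    using antidiagonal_value[of n "n + 1"] by simp
  moreover have "y0 - 1 - int (n + 1) = y0 - 2 - int n" by simp
  ultimately show ?thesis by (simp only: of_int_eq_iff)
qed

lemma pythagorean_triple:
  "(t (x0 + int (n + 1), y0 - 1 - int (n + 1)) - t (x0 + int n, y0 - 1 - int n))\<^sup>2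
   + (t (x0 + int n, y0 - 2 - int n) + t (x0 + int n + 1, y0 - 1 - int n))\<^sup>2
   = (t (x0 + int (n + 1), y0 - 1 - int (n + 1)) + t (x0 + int n, y0 - 1 - int n))\<^sup>2"
  unfolding antidiagonal_square[of n] antidiagonal_square[of "n + 1"] right_neighbour_value lower_neighbour_value
  by (simp add: power2_eq_square algebra_simps)

end

theorem mainTheorem7:
  fixes h :: nat and s :: "nat \<Rightarrow> letter"
    and P :: "int \<Rightarrow> int \<times> int" and t :: "int \<times> int \<Rightarrow> int"
  assumes adm: "\<not> ult_const s"
    and path: "is_path (frontier h s) P"
    and nonneg: "\<forall>p. 0 \<le> t p"
    and tiling: "sl2_tiling t"
    and ones: "\<forall>i. t (P i) = 1"
  shows "let I = P (int h);
             i = (\<lambda>n::nat. t (fst I + int n, snd I));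
             j = (\<lambda>n::nat. t (fst I + int n, snd I - 1 - int n));
             k' = (\<lambda>n::nat. t (fst I + int n + 1, snd I - 1 - int n));
             k = (\<lambda>n::nat. t (fst I + int n, snd I - 2 - int n))
         in (\<forall>n. k' n - 1 = (int h + 1) * i n * i (n + 1))
          \<and> (\<forall>n. (j (n + 1) - j n)^2 + (k n + k' n)^2 = (j (n + 1) + j n)^2)"
proof -
  interpret frontier_tiling h s P t
    using assms by (simp add: frontier_tiling_def frontier_path_def frontier_tiling_axioms_def)
  show ?thesis
    unfolding Let_def x0_def[symmetric] y0_def[symmetric]
    using right_neighbour_value pythagorean_triple by simp
qed

end
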